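(* Let $L,R$ be nonempty subsets of a group $G$. The two-sided group digraph $2\mathrm{S}(G;L,R)$ is weakly connected if and only if $G=\mathcal{W}(\bar{L})\mathcal{W}(\bar{R})$ and some element of $\bar{L}$ or of $\bar{R}$ is weakly connected to $e$.
   Context: For nonempty subsets $L,R$ of a group $G$, the two-sided group digraph $2\mathrm{S}(G;L,R)$ has vertex set $G$ and a directed arc $(g,h)$ if and only if $h=l^{-1}gr$ for some $l\in L$, $r\in R$. Write $\bar{L}=L\cup L^{-1}$, $\bar{R}=R\cup R^{-1}$; for nonempty $S$, $\mathcal{W}(S)$ is the set of elements expressible as finite products $s_1\cdots s_n$, $n\ge1$, $s_i\in S$. Vertex $g$ is weakly connected to $h$ if there is a sequence $g=g_0,\dots,g_n=h$ such that for each $i$ either $(g_{i-1},g_i)$ or $(g_i,g_{i-1})$ is an arc; the digraph is weakly connected if every pair of vertices is weakly connected. *)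

theory Defs
  imports "HOL-Algebra.Coset"
begin

definition tsg_arc :: "('a, 'b) monoid_scheme \<Rightarrow> 'a set \<Rightarrow> 'a set \<Rightarrow> 'a \<Rightarrow> 'a \<Rightarrow> bool" where
  "tsg_arc G L R g h \<longleftrightarrow> g \<in> carrier G \<and> h \<in> carrier G \<and>
     (\<exists>l\<in>L. \<exists>r\<in>R. h = inv\<^bsub>G\<^esub> l \<otimes>\<^bsub>G\<^esub> g \<otimes>\<^bsub>G\<^esub> r)"

definition tsg_weakly_conn :: "('a, 'b) monoid_scheme \<Rightarrow> 'a set \<Rightarrow> 'a set \<Rightarrow> 'a \<Rightarrow> 'a \<Rightarrow> bool" where
  "tsg_weakly_conn G L R g h \<longleftrightarrow>
     (\<lambda>x y. tsg_arc G L R x y \<or> tsg_arc G L R y x)\<^sup>*\<^sup>* g h"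

definition tsg_weakly_connected :: "('a, 'b) monoid_scheme \<Rightarrow> 'a set \<Rightarrow> 'a set \<Rightarrow> bool" where
  "tsg_weakly_connected G L R \<longleftrightarrow>
     (\<forall>g\<in>carrier G. \<forall>h\<in>carrier G. tsg_weakly_conn G L R g h)"

definition sym_set :: "('a, 'b) monoid_scheme \<Rightarrow> 'a set \<Rightarrow> 'a set" where
  "sym_set G S = S \<union> (\<lambda>x. inv\<^bsub>G\<^esub> x) ` S"

inductive_set words_set :: "('a, 'b) monoid_scheme \<Rightarrow> 'a set \<Rightarrow> 'a set"
  for G :: "('a, 'b) monoid_scheme" and S :: "'a set" where
  single: "s \<in> S \<Longrightarrow> s \<in> words_set G S"
| snoc: "x \<in> words_set G S \<Longrightarrow> s \<in> S \<Longrightarrow> x \<otimes>\<^bsub>G\<^esub> s \<in> words_set G S"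

end

theory Submission
  imports Defs
begin

text \<open>Writing an arc g \<rightarrow> l\<inverse> g r as l x \<rightarrow> x r with x = l\<inverse> g, weak connectivity is the
  equivalence relation generated by l x \<sim> x r (l \<in> L, r \<in> R). Chaining three such steps shows
  that this relation is invariant under left multiplication by elements of L\<inverse> \<union> L and right
  multiplication by elements of R\<inverse> \<union> R. Necessity: W(L\<inverse> \<union> L) W(R\<inverse> \<union> R) contains e and is
  closed under g \<mapsto> s g t, so it contains the component of e. Sufficiency: since l \<sim> r and
  r\<inverse> \<sim> l\<inverse> for all l, r, and s \<sim> e \<longleftrightarrow> s\<inverse> \<sim> e by invariance, one generator connected to e
  forces all of them to be; invariance then carries this to all words and to their products.\<close>

context group
begin

lemma sym_set_subset: "S \<subseteq> carrier G \<Longrightarrow> sym_set G S \<subseteq> carrier G"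
  unfolding sym_set_def by auto

lemma words_set_subset:
  assumes "S \<subseteq> carrier G" shows "words_set G S \<subseteq> carrier G"
proof
  show "u \<in> carrier G" if "u \<in> words_set G S" for u
    using that by induction (use assms in auto)
qed

lemma words_set_mult_left_closed:
  assumes S: "S \<subseteq> carrier G" and s: "s \<in> S" and u: "u \<in> words_set G S"
  shows "s \<otimes> u \<in> words_set G S"
  using u
proof induction
  case (single t)
  show ?case using words_set.snoc[OF words_set.single[OF s] single] .
next
  case (snoc u t)
  have "s \<in> carrier G" "u \<in> carrier G" "t \<in> carrier G"
    using S s snoc.hyps words_set_subset[OF S] by auto
  then have "s \<otimes> (u \<otimes> t) = (s \<otimes> u) \<otimes> t" by (simp add: m_assoc)
  then show ?case using snoc by (simp add: words_set.snoc)
qed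

lemma words_set_mult_left_invariant:
  assumes S: "S \<subseteq> carrier G"
    and inv: "\<And>s x y. s \<in> S \<Longrightarrow> x \<in> carrier G \<Longrightarrow> y \<in> carrier G \<Longrightarrow> P x y \<Longrightarrow> P (s \<otimes> x) (s \<otimes> y)"
    and u: "u \<in> words_set G S"
  shows "x \<in> carrier G \<Longrightarrow> y \<in> carrier G \<Longrightarrow> P x y \<Longrightarrow> P (u \<otimes> x) (u \<otimes> y)"
  using u
proof (induction arbitrary: x y)
  case (single s)
  then show ?case by (rule inv)
next
  case (snoc u s)
  have s: "s \<in> carrier G" and "u \<in> carrier G"
    using S snoc.hyps words_set_subset[OF S] by auto
  with snoc have "P (u \<otimes> (s \<otimes> x)) (u \<otimes> (s \<otimes> y))" by (simp add: inv)
  with s \<open>u \<in> carrier G\<close> snoc.prems show ?case by (simp add: m_assoc)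
qed

end

locale two_sided_group_digraph = group G for G (structure) +
  fixes L R :: "'a set"
  assumes L_subset: "L \<subseteq> carrier G" and R_subset: "R \<subseteq> carrier G"
begin

abbreviation wconn :: "'a \<Rightarrow> 'a \<Rightarrow> bool" where
  "wconn \<equiv> tsg_weakly_conn G L R"

lemma wconn_sym: "wconn g h \<Longrightarrow> wconn h g"
  unfolding tsg_weakly_conn_def by (rule sympD[OF symp_rtranclp]) (auto intro: sympI)

lemma wconn_trans [trans]: "wconn g h \<Longrightarrow> wconn h k \<Longrightarrow> wconn g k"
  unfolding tsg_weakly_conn_def by (rule rtranclp_trans)

lemma arc_shift_form:
  assumes "tsg_arc G L R g h"
  obtains l x r where "l \<in> L" "r \<in> R" "x \<in> carrier G" "g = l \<otimes> x" "h = x \<otimes> r"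
proof -
  from assms obtain l r where "l \<in> L" "r \<in> R" "g \<in> carrier G" "h = inv l \<otimes> g \<otimes> r"
    unfolding tsg_arc_def by auto
  moreover have "g = l \<otimes> (inv l \<otimes> g)"
    using \<open>l \<in> L\<close> \<open>g \<in> carrier G\<close> L_subset by (auto simp: m_assoc[symmetric])
  ultimately show ?thesis using L_subset that by blast
qed

lemma wconn_shift:
  assumes l: "l \<in> L" and r: "r \<in> R" and x: "x \<in> carrier G"
  shows "wconn (l \<otimes> x) (x \<otimes> r)"
proof -
  have "l \<in> carrier G" "r \<in> carrier G" using l r L_subset R_subset by auto
  with x have "x \<otimes> r = inv l \<otimes> (l \<otimes> x) \<otimes> r" by (simp add: m_assoc[symmetric])
  with l r x \<open>l \<in> carrier G\<close> \<open>r \<in> carrier G\<close> have "tsg_arc G L R (l \<otimes> x) (x \<otimes> r)"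
    unfolding tsg_arc_def by blast
  then show ?thesis unfolding tsg_weakly_conn_def by (simp add: r_into_rtranclp)
qed

lemma wconn_shift_inv:
  assumes l: "l \<in> L" and r: "r \<in> R" and w: "w \<in> carrier G"
  shows "wconn (w \<otimes> inv r) (inv l \<otimes> w)"
proof -
  have "l \<in> carrier G" "r \<in> carrier G" using l r L_subset R_subset by auto
  with w have "l \<otimes> (inv l \<otimes> w \<otimes> inv r) = w \<otimes> inv r" "inv l \<otimes> w \<otimes> inv r \<otimes> r = inv l \<otimes> w"
    by (simp add: m_assoc[symmetric], simp add: m_assoc)
  with wconn_shift[OF l r, of "inv l \<otimes> w \<otimes> inv r"] show ?thesis
    using \<open>l \<in> carrier G\<close> \<open>r \<in> carrier G\<close> w by simp
qed

lemma wconn_map: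
  assumes "wconn g h"
    and "\<And>l x r. l \<in> L \<Longrightarrow> r \<in> R \<Longrightarrow> x \<in> carrier G \<Longrightarrow> wconn (f (l \<otimes> x)) (f (x \<otimes> r))"
  shows "wconn (f g) (f h)"
  using assms(1) unfolding tsg_weakly_conn_def
proof (induction rule: rtranclp_induct)
  case (step y z)
  have "wconn (f y) (f z)"
    using step(2) by (elim disjE arc_shift_form) (auto intro: assms(2) wconn_sym)
  with step(3) show ?case using wconn_trans unfolding tsg_weakly_conn_def by blast
qed simp

lemma wconn_mult_left:
  assumes s: "s \<in> sym_set G L" and "wconn g h"
  shows "wconn (s \<otimes> g) (s \<otimes> h)"
  using \<open>wconn g h\<close>
proof (rule wconn_map[where f = "\<lambda>y. s \<otimes> y"])
  fix l x r assume l: "l \<in> L" and r: "r \<in> R" and x: "x \<in> carrier G"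
  have [simp]: "l \<in> carrier G" "r \<in> carrier G" using l r L_subset R_subset by auto
  from s consider (gen) "s \<in> L" | (inv) l' where "l' \<in> L" "s = inv l'"
    unfolding sym_set_def by auto
  then show "wconn (s \<otimes> (l \<otimes> x)) (s \<otimes> (x \<otimes> r))"
  proof cases
    case gen
    have "wconn (s \<otimes> (l \<otimes> x)) ((l \<otimes> x) \<otimes> r)" using gen r x by (simp add: wconn_shift)
    also have "(l \<otimes> x) \<otimes> r = l \<otimes> (x \<otimes> r)" using x by (simp add: m_assoc)
    also have "wconn \<dots> ((x \<otimes> r) \<otimes> r)" using l r x by (simp add: wconn_shift)
    also have "wconn \<dots> (s \<otimes> (x \<otimes> r))" using gen r x by (simp add: wconn_shift wconn_sym)
    finally show ?thesis .
  next
    case inv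
    have "wconn (s \<otimes> (l \<otimes> x)) ((l \<otimes> x) \<otimes> inv r)"
      using inv r x by (simp add: wconn_shift_inv wconn_sym)
    also have "wconn \<dots> (inv l \<otimes> (l \<otimes> x))" using l r x by (simp add: wconn_shift_inv)
    also have "inv l \<otimes> (l \<otimes> x) = (x \<otimes> r) \<otimes> inv r"
      using x by (simp add: m_assoc[symmetric], simp add: m_assoc)
    also have "wconn \<dots> (s \<otimes> (x \<otimes> r))" using inv r x by (simp add: wconn_shift_inv)
    finally show ?thesis .
  qed
qed

lemma wconn_mult_right:
  assumes t: "t \<in> sym_set G R" and "wconn g h"
  shows "wconn (g \<otimes> t) (h \<otimes> t)"
  using \<open>wconn g h\<close>
proof (rule wconn_map[where f = "\<lambda>y. y \<otimes> t"])
  fix l x r assume l: "l \<in> L" and r: "r \<in> R" and x: "x \<in> carrier G"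
  have [simp]: "l \<in> carrier G" "r \<in> carrier G" using l r L_subset R_subset by auto
  from t consider (gen) "t \<in> R" | (inv) r' where "r' \<in> R" "t = inv r'"
    unfolding sym_set_def by auto
  then show "wconn ((l \<otimes> x) \<otimes> t) ((x \<otimes> r) \<otimes> t)"
  proof cases
    case gen
    have "wconn ((l \<otimes> x) \<otimes> t) (l \<otimes> (l \<otimes> x))" using gen l x by (simp add: wconn_shift wconn_sym)
    also have "wconn \<dots> ((l \<otimes> x) \<otimes> r)" using l r x by (simp add: wconn_shift)
    also have "(l \<otimes> x) \<otimes> r = l \<otimes> (x \<otimes> r)" using x by (simp add: m_assoc)
    also have "wconn \<dots> ((x \<otimes> r) \<otimes> t)" using gen l r x by (simp add: wconn_shift)
    finally show ?thesis .
  next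
    case inv
    have "wconn ((l \<otimes> x) \<otimes> t) (inv l \<otimes> (l \<otimes> x))" using inv l x by (simp add: wconn_shift_inv)
    also have "inv l \<otimes> (l \<otimes> x) = l \<otimes> (inv l \<otimes> x)" using x by (simp add: m_assoc[symmetric])
    also have "wconn \<dots> ((inv l \<otimes> x) \<otimes> r)" using l r x by (simp add: wconn_shift)
    also have "(inv l \<otimes> x) \<otimes> r = inv l \<otimes> (x \<otimes> r)" using x by (simp add: m_assoc)
    also have "wconn \<dots> ((x \<otimes> r) \<otimes> t)" using inv l r x by (simp add: wconn_shift_inv wconn_sym)
    finally show ?thesis .
  qed
qed

lemma wconn_mult_left_words:
  "u \<in> words_set G (sym_set G L) \<Longrightarrow> g \<in> carrier G \<Longrightarrow> h \<in> carrier G \<Longrightarrow> wconn g h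
    \<Longrightarrow> wconn (u \<otimes> g) (u \<otimes> h)"
  by (rule words_set_mult_left_invariant[OF sym_set_subset[OF L_subset]]) (auto intro: wconn_mult_left)

lemma sym_set_mult_mem_products:
  assumes s: "s \<in> sym_set G L" and t: "t \<in> sym_set G R"
    and g: "g \<in> words_set G (sym_set G L) <#> words_set G (sym_set G R)"
  shows "s \<otimes> g \<otimes> t \<in> words_set G (sym_set G L) <#> words_set G (sym_set G R)"
proof -
  from g obtain a b where a: "a \<in> words_set G (sym_set G L)" and b: "b \<in> words_set G (sym_set G R)"
    and "g = a \<otimes> b" unfolding set_mult_def by auto
  have "a \<in> carrier G" "b \<in> carrier G" "s \<in> carrier G" "t \<in> carrier G"
    using a b s t words_set_subset sym_set_subset L_subset R_subset by blast+
  then have "s \<otimes> g \<otimes> t = (s \<otimes> a) \<otimes> (b \<otimes> t)" using \<open>g = a \<otimes> b\<close> by (simp add: m_assoc)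
  moreover have "s \<otimes> a \<in> words_set G (sym_set G L)"
    using words_set_mult_left_closed[OF sym_set_subset[OF L_subset] s a] .
  moreover have "b \<otimes> t \<in> words_set G (sym_set G R)" using b t by (rule words_set.snoc)
  ultimately show ?thesis unfolding set_mult_def by blast
qed

lemma wconn_one_mem_products:
  assumes "L \<noteq> {}" "R \<noteq> {}" and "wconn \<one> g"
  shows "g \<in> words_set G (sym_set G L) <#> words_set G (sym_set G R)"
  using \<open>wconn \<one> g\<close> unfolding tsg_weakly_conn_def
proof (induction rule: rtranclp_induct)
  case base
  obtain l r where l: "l \<in> L" and r: "r \<in> R" using assms by auto
  have "l \<in> carrier G" "r \<in> carrier G" using l r L_subset R_subset by auto
  then have one: "\<one> = (inv l \<otimes> l) \<otimes> (inv r \<otimes> r)" by simp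
  have "inv l \<in> sym_set G L" "l \<in> sym_set G L" "inv r \<in> sym_set G R" "r \<in> sym_set G R"
    using l r by (auto simp: sym_set_def)
  then have "inv l \<otimes> l \<in> words_set G (sym_set G L)" "inv r \<otimes> r \<in> words_set G (sym_set G R)"
    by (auto intro: words_set.snoc[OF words_set.single])
  with one show ?case unfolding set_mult_def by blast
next
  case (step y z)
  from step(2) obtain s t where "s \<in> sym_set G L" "t \<in> sym_set G R" "z = s \<otimes> y \<otimes> t"
  proof (elim disjE)
    assume "tsg_arc G L R y z"
    then obtain l r where "l \<in> L" "r \<in> R" "z = inv l \<otimes> y \<otimes> r" unfolding tsg_arc_def by blast
    moreover have "inv l \<in> sym_set G L" "r \<in> sym_set G R"
      using \<open>l \<in> L\<close> \<open>r \<in> R\<close> by (auto simp: sym_set_def)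
    ultimately show ?thesis using that by blast
  next
    assume "tsg_arc G L R z y"
    then obtain l r where l: "l \<in> L" and r: "r \<in> R" and "z \<in> carrier G" "y = inv l \<otimes> z \<otimes> r"
      unfolding tsg_arc_def by blast
    moreover have "l \<in> carrier G" "r \<in> carrier G" using l r L_subset R_subset by auto
    ultimately have "z = l \<otimes> y \<otimes> inv r" by (simp add: m_assoc[symmetric], simp add: m_assoc)
    moreover have "l \<in> sym_set G L" "inv r \<in> sym_set G R" using l r by (auto simp: sym_set_def)
    ultimately show ?thesis using that by blast
  qed
  with step(3) show ?case by (simp add: sym_set_mult_mem_products)
qed

lemma wconn_one_inv_iff:
  assumes "s \<in> L \<union> R" shows "wconn (inv s) \<one> \<longleftrightarrow> wconn s \<one>"
proof -
  have s: "s \<in> carrier G" using assms L_subset R_subset by auto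
  have sL: "s \<in> sym_set G L" "inv s \<in> sym_set G L" if "s \<in> L" using that by (auto simp: sym_set_def)
  have sR: "s \<in> sym_set G R" "inv s \<in> sym_set G R" if "s \<in> R" using that by (auto simp: sym_set_def)
  show ?thesis
  proof
    assume "wconn (inv s) \<one>"
    then have "wconn (s \<otimes> inv s) (s \<otimes> \<one>) \<or> wconn (inv s \<otimes> s) (\<one> \<otimes> s)"
      using assms sL sR wconn_mult_left wconn_mult_right by blast
    then show "wconn s \<one>" using s by (auto intro: wconn_sym)
  next
    assume "wconn s \<one>"
    then have "wconn (inv s \<otimes> s) (inv s \<otimes> \<one>) \<or> wconn (s \<otimes> inv s) (\<one> \<otimes> inv s)"
      using assms sL sR wconn_mult_left wconn_mult_right by blast
    then show "wconn (inv s) \<one>" using s by (auto intro: wconn_sym)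
  qed
qed

lemma wconn_on_generators:
  assumes "L \<noteq> {}" "R \<noteq> {}"
    and "\<And>l r. l \<in> L \<Longrightarrow> r \<in> R \<Longrightarrow> wconn (f l) (f r)"
    and "s \<in> L \<union> R" "t \<in> L \<union> R"
  shows "wconn (f s) (f t)"
proof -
  obtain l0 r0 where l0: "l0 \<in> L" and r0: "r0 \<in> R" using assms(1,2) by auto
  have "wconn (f y) (f l0)" if "y \<in> L \<union> R" for y
    using that assms(3)[OF _ r0] assms(3)[OF l0] assms(3)[OF l0 r0] wconn_sym wconn_trans by blast
  then show ?thesis using assms(4,5) wconn_sym wconn_trans by blast
qed

lemma wconn_one_all_generators:
  assumes "L \<noteq> {}" "R \<noteq> {}" and x: "x \<in> sym_set G L \<union> sym_set G R" "wconn x \<one>"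
    and s: "s \<in> sym_set G L \<union> sym_set G R"
  shows "wconn s \<one>"
proof -
  have "wconn l r" "wconn (inv l) (inv r)" if "l \<in> L" "r \<in> R" for l r
  proof -
    have "l \<in> carrier G" "r \<in> carrier G" using that L_subset R_subset by auto
    then show "wconn l r" "wconn (inv l) (inv r)"
      using wconn_shift[OF that one_closed] wconn_shift_inv[OF that one_closed]
      by (simp_all add: wconn_sym)
  qed
  then have gens: "wconn y y'" and inv_gens: "wconn (inv y) (inv y')"
    if "y \<in> L \<union> R" "y' \<in> L \<union> R" for y y'
    using wconn_on_generators[where f = "\<lambda>y. y", OF assms(1,2) _ that]
      wconn_on_generators[where f = "\<lambda>y. inv y", OF assms(1,2) _ that] by blast+
  from x(1) consider (gen) "x \<in> L \<union> R" | (inv) y where "y \<in> L \<union> R" "x = inv y"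
    unfolding sym_set_def by auto
  then have "wconn y \<one> \<and> wconn (inv y) \<one>" if "y \<in> L \<union> R" for y
  proof cases
    case gen
    then show ?thesis using that gens x(2) wconn_trans wconn_one_inv_iff by blast
  next
    case (inv y')
    then show ?thesis using that inv_gens x(2) wconn_trans wconn_one_inv_iff by blast
  qed
  with s show ?thesis unfolding sym_set_def by blast
qed

lemma weakly_connected_if_products_cover:
  assumes cover: "carrier G = words_set G (sym_set G L) <#> words_set G (sym_set G R)"
    and gens: "\<And>s. s \<in> sym_set G L \<union> sym_set G R \<Longrightarrow> wconn s \<one>"
  shows "tsg_weakly_connected G L R"
proof -
  have WL_carrier: "words_set G (sym_set G L) \<subseteq> carrier G"
    and WR_carrier: "words_set G (sym_set G R) \<subseteq> carrier G"
    using words_set_subset[OF sym_set_subset[OF L_subset]]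
      words_set_subset[OF sym_set_subset[OF R_subset]] .
  have WL: "wconn u \<one>" if "u \<in> words_set G (sym_set G L)" for u
    using that
  proof induction
    case (single s)
    then show ?case by (rule gens[OF UnI1])
  next
    case (snoc u s)
    have u: "u \<in> carrier G" using snoc.hyps(1) WL_carrier by blast
    have s: "s \<in> carrier G" using snoc.hyps(2) sym_set_subset[OF L_subset] by blast
    have "wconn (u \<otimes> s) (u \<otimes> \<one>)"
      by (rule wconn_mult_left_words[OF snoc.hyps(1) s one_closed gens[OF UnI1[OF snoc.hyps(2)]]])
    with u have "wconn (u \<otimes> s) u" by simp
    then show ?case using snoc.IH by (rule wconn_trans)
  qed
  have WR: "wconn v \<one>" if "v \<in> words_set G (sym_set G R)" for v
    using that
  proof induction
    case (single t)
    then show ?case by (rule gens[OF UnI2])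
  next
    case (snoc v t)
    have t: "t \<in> carrier G" using snoc.hyps(2) sym_set_subset[OF R_subset] by blast
    have "wconn (v \<otimes> t) (\<one> \<otimes> t)" by (rule wconn_mult_right[OF snoc.hyps(2) snoc.IH])
    with t have "wconn (v \<otimes> t) t" by simp
    then show ?case using gens[OF UnI2[OF snoc.hyps(2)]] by (rule wconn_trans)
  qed
  have "wconn g \<one>" if "g \<in> carrier G" for g
  proof -
    have "g \<in> words_set G (sym_set G L) <#> words_set G (sym_set G R)" using that cover by simp
    then obtain a b where a: "a \<in> words_set G (sym_set G L)"
      and b: "b \<in> words_set G (sym_set G R)" and g: "g = a \<otimes> b"
      unfolding set_mult_def by blast
    have "a \<in> carrier G" "b \<in> carrier G" using a b WL_carrier WR_carrier by blast+
    then have "wconn (a \<otimes> b) a" using wconn_mult_left_words[OF a _ one_closed WR[OF b]] by simp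
    then show ?thesis using g WL[OF a] by (blast intro: wconn_trans)
  qed
  then show ?thesis unfolding tsg_weakly_connected_def using wconn_sym wconn_trans by blast
qed

end

theorem mainTheorem10:
  fixes G :: "('a, 'b) monoid_scheme" and L R :: "'a set"
  assumes "group G"
    and "L \<subseteq> carrier G" and "L \<noteq> {}"
    and "R \<subseteq> carrier G" and "R \<noteq> {}"
  shows "tsg_weakly_connected G L R \<longleftrightarrow>
           (carrier G = words_set G (sym_set G L) <#>\<^bsub>G\<^esub> words_set G (sym_set G R) \<and>
            (\<exists>x \<in> sym_set G L \<union> sym_set G R. tsg_weakly_conn G L R x \<one>\<^bsub>G\<^esub>))"
proof -
  interpret two_sided_group_digraph G L R
    using assms by (simp add: two_sided_group_digraph_def two_sided_group_digraph_axioms_def)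
  have products_subset: "words_set G (sym_set G L) <#>\<^bsub>G\<^esub> words_set G (sym_set G R) \<subseteq> carrier G"
    using words_set_subset[OF sym_set_subset] L_subset R_subset unfolding set_mult_def by blast
  obtain l where "l \<in> L" using assms by auto
  then have "l \<in> sym_set G L" "l \<in> carrier G" using L_subset by (auto simp: sym_set_def)
  show ?thesis
  proof
    assume "tsg_weakly_connected G L R"
    then show "carrier G = words_set G (sym_set G L) <#>\<^bsub>G\<^esub> words_set G (sym_set G R) \<and>
        (\<exists>x \<in> sym_set G L \<union> sym_set G R. wconn x \<one>\<^bsub>G\<^esub>)"
      using products_subset wconn_one_mem_products[OF assms(3,5)] \<open>l \<in> sym_set G L\<close> \<open>l \<in> carrier G\<close>
      unfolding tsg_weakly_connected_def by blast
  qed (use weakly_connected_if_products_cover wconn_one_all_generators[OF assms(3,5)] in blast)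
qed

end
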